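(* Let $(V_1,V_2)$ be a pair of commuting isometries on a Hilbert space $\mathcal H$ with $\operatorname{ran}V_1=\operatorname{ran}V_2$. Then there exist Hilbert spaces $\mathcal L$ and $\mathcal K$ such that, up to unitary equivalence, $\mathcal H=(H^2_{\mathbb D}\otimes\mathcal L)\oplus\mathcal K$ and in this decomposition $$V_1=\begin{pmatrix}M_z\otimes I_{\mathcal L}&0\\0&W_1\end{pmatrix},\qquad V_2=\begin{pmatrix}M_z\otimes W&0\\0&W_2\end{pmatrix}$$ for some unitary $W$ on $\mathcal L$ and commuting unitaries $W_1,W_2$ on $\mathcal K$.
   Context: $H^2_{\mathbb D}$ is the Hardy space of the unit disc and $M_z$ is multiplication by $z$ on it. The condition $\operatorname{ran}V_1=\operatorname{ran}V_2$ is equivalent (for commuting isometries) to the defect operator $I-V_1V_1^*-V_2V_2^*+V_1V_2V_2^*V_1^*$ being a difference of two mutually orthogonal projections whose ranges sum to $\ker(V_1V_2)^*$. *)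

theory Defs
  imports "HOL-Analysis.Analysis"
begin

text \<open>A complex Hilbert space is modelled as a real Hilbert space (type class
  real_inner + complete_space) together with an orthogonal complex structure J
  (multiplication by the imaginary unit).  Complex-linear maps are the real-linear
  maps commuting with J.\<close>

definition cstruct :: "('h::real_inner \<Rightarrow> 'h) \<Rightarrow> bool" where
  "cstruct J \<longleftrightarrow> linear J \<and> (\<forall>x. J (J x) = - x) \<and> (\<forall>x. norm (J x) = norm x)"

definition c_isometry :: "('h::real_inner \<Rightarrow> 'h) \<Rightarrow> ('h \<Rightarrow> 'h) \<Rightarrow> bool" where
  "c_isometry J V \<longleftrightarrow> linear V \<and> (\<forall>x. V (J x) = J (V x)) \<and> (\<forall>x. norm (V x) = norm x)"

text \<open>Closed complex subspace (used as carrier of an auxiliary Hilbert space).\<close>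
definition csubspace :: "('h::real_inner \<Rightarrow> 'h) \<Rightarrow> 'h set \<Rightarrow> bool" where
  "csubspace J S \<longleftrightarrow> subspace S \<and> closed S \<and> (\<forall>x\<in>S. J x \<in> S)"

definition unitary_on :: "('h::real_inner \<Rightarrow> 'h) \<Rightarrow> 'h set \<Rightarrow> ('h \<Rightarrow> 'h) \<Rightarrow> bool" where
  "unitary_on J S W \<longleftrightarrow>
     (\<forall>x\<in>S. \<forall>y\<in>S. W (x + y) = W x + W y) \<and>
     (\<forall>c x. x \<in> S \<longrightarrow> W (c *\<^sub>R x) = c *\<^sub>R W x) \<and>
     (\<forall>x\<in>S. W (J x) = J (W x)) \<and>
     (\<forall>x\<in>S. norm (W x) = norm x) \<and>
     W ` S = S"

text \<open>The vector-valued Hardy space H^2 (tensor) L, realised via Taylor coefficients: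
  f = sum_n z^n (tensor) f_n with f_n in L and sum_n norm(f_n)^2 finite.\<close>
definition hardy :: "'h::real_normed_vector set \<Rightarrow> (nat \<Rightarrow> 'h) set" where
  "hardy L = {f. (\<forall>n. f n \<in> L) \<and> summable (\<lambda>n. (norm (f n))\<^sup>2)}"

text \<open>The operator M_z (tensor) W on coefficient sequences.\<close>
definition tshift :: "('h::zero \<Rightarrow> 'h) \<Rightarrow> (nat \<Rightarrow> 'h) \<Rightarrow> (nat \<Rightarrow> 'h)" where
  "tshift W f = (\<lambda>n. case n of 0 \<Rightarrow> 0 | Suc m \<Rightarrow> W (f m))"

definition unitary_onto :: "('h::real_inner \<Rightarrow> 'h) \<Rightarrow> 'h set \<Rightarrow> 'h set
     \<Rightarrow> ('h \<Rightarrow> (nat \<Rightarrow> 'h) \<times> 'h) \<Rightarrow> bool" where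
  "unitary_onto J L K U \<longleftrightarrow>
     (\<forall>n. linear (\<lambda>x. fst (U x) n)) \<and> linear (\<lambda>x. snd (U x)) \<and>
     (\<forall>x. U (J x) = ((\<lambda>n. J (fst (U x) n)), J (snd (U x)))) \<and>
     (\<forall>x. (norm x)\<^sup>2 = (\<Sum>n. (norm (fst (U x) n))\<^sup>2) + (norm (snd (U x)))\<^sup>2) \<and>
     range U = hardy L \<times> K"

end

theory Submission
  imports Defs
begin

text \<open>
  Since \<open>ran V\<^sub>1 = ran V\<^sub>2\<close>, the operator \<open>X = V\<^sub>1\<^sup>* V\<^sub>2\<close> is a unitary with
  \<open>V\<^sub>2 = V\<^sub>1 X\<close>, and \<open>X\<close> commutes with \<open>V\<^sub>1\<close> because \<open>V\<^sub>1\<close> and \<open>V\<^sub>2\<close> commute.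
  The Wold decomposition of the single isometry \<open>V\<^sub>1\<close> identifies \<open>H\<close> with
  \<open>(H\<^sup>2 \<otimes> L) \<oplus> K\<close>, where \<open>L = ker V\<^sub>1\<^sup>*\<close> is the wandering subspace and
  \<open>K = \<Inter>\<^sub>n ran V\<^sub>1\<^sup>n\<close> the unitary part: \<open>x\<close> goes to the coefficient sequence
  \<open>(P\<^sub>L (V\<^sub>1\<^sup>*)\<^sup>n x)\<^sub>n\<close> together with \<open>P\<^sub>K x = lim V\<^sub>1\<^sup>n (V\<^sub>1\<^sup>*)\<^sup>n x\<close>, and \<open>V\<^sub>1\<close> becomes
  \<open>M\<^sub>z \<otimes> I \<oplus> V\<^sub>1|\<^sub>K\<close>. Every unitary commuting with \<open>V\<^sub>1\<close> also commutes with
  \<open>V\<^sub>1\<^sup>*\<close>, hence with this identification; applied to \<open>X\<close> this turns \<open>V\<^sub>2 = V\<^sub>1 X\<close>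
  into \<open>M\<^sub>z \<otimes> X|\<^sub>L \<oplus> V\<^sub>2|\<^sub>K\<close>, and applied to the complex structure \<open>J\<close> it
  makes everything complex linear.
\<close>

lemma funpow_commute:
  assumes "\<And>x. f (g x) = g (f x)"
  shows "f ((g ^^ n) x) = (g ^^ n) (f x)"
  by (induction n) (simp_all add: assms)

lemma bounded_linear_funpow:
  fixes f :: "'a::real_normed_vector \<Rightarrow> 'a"
  assumes "bounded_linear f"
  shows "bounded_linear (f ^^ n)"
proof (induction n)
  case 0
  show ?case by (simp add: id_def bounded_linear_ident)
next
  case (Suc n)
  show ?case using bounded_linear_compose[OF assms Suc] by (simp add: comp_def)
qed

lemma orthogonal_transformation_funpow:
  fixes f :: "'a::real_inner \<Rightarrow> 'a"
  assumes "orthogonal_transformation f"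
  shows "orthogonal_transformation (f ^^ n)"
proof (induction n)
  case 0
  show ?case by (simp add: orthogonal_transformation_def linear_id)
next
  case (Suc n)
  then show ?case
    using orthogonal_transformation_compose[OF assms Suc] by (simp add: comp_def)
qed

lemma orthogonal_transformation_bounded_linear:
  assumes "orthogonal_transformation f"
  shows "bounded_linear f"
  using assms
  by (intro bounded_linear_intro[where K=1])
    (simp_all add: orthogonal_transformation_def linear_add linear_scale orthogonal_transformation_norm)

lemma orthogonal_transformation_closed_range:
  fixes f :: "'a::{real_inner,complete_space} \<Rightarrow> 'a"
  assumes "orthogonal_transformation f"
  shows "closed (range f)"
proof -
  have "complete (range f)"
    using assms
    by (intro complete_isometric_image[of 1])
      (simp_all add: complete_UNIV orthogonal_transformation_bounded_linear orthogonal_transformation_norm)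
  then show ?thesis by (rule complete_imp_closed)
qed

lemma tshift_id_comp: "tshift id (\<lambda>n. T (f n)) = tshift T f"
  by (simp add: tshift_def fun_eq_iff split: nat.split)

lemma image_eq_if_vimage_eq: "surj T \<Longrightarrow> T -` S = S \<Longrightarrow> T ` S = S"
  by (metis surj_image_vimage_eq)

section \<open>Orthogonal projection onto a closed subspace\<close>

lemma norm_diff_midpoint:
  fixes x a b :: "'a::real_inner"
  shows "(norm (a - b))\<^sup>2 = 2 * (norm (x - a))\<^sup>2 + 2 * (norm (x - b))\<^sup>2 - 4 * (norm (x - (1/2) *\<^sub>R (a + b)))\<^sup>2"
  by (simp add: power2_norm_eq_inner inner_diff_left inner_diff_right inner_add_left inner_add_right
      inner_commute algebra_simps)

lemma closed_subspace_nearest_point: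
  fixes S :: "'a::{real_inner,complete_space} set"
  assumes "subspace S" and "closed S"
  obtains p where "p \<in> S" and "\<And>s. s \<in> S \<Longrightarrow> norm (x - p) \<le> norm (x - s)"
proof -
  define d where "d = infdist x S"
  have S_ne: "S \<noteq> {}" using subspace_0[OF assms(1)] by blast
  have d_le: "d \<le> norm (x - s)" if "s \<in> S" for s
    using infdist_le[OF that, of x] by (simp add: d_def dist_norm)
  have "\<exists>s\<in>S. norm (x - s) < d + 1 / Suc n" for n
  proof -
    have "(INF s\<in>S. dist x s) < d + 1 / Suc n"
      using infdist_notempty[OF S_ne] by (simp add: d_def)
    then show ?thesis
      using S_ne by (subst (asm) cINF_less_iff) (auto simp: dist_norm intro: bdd_belowI2[of _ 0])
  qed
  then obtain s where s_in: "\<And>n. s n \<in> S" and s_near: "\<And>n. norm (x - s n) < d + 1 / Suc n"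
    by metis
  have s_lim: "(\<lambda>n. norm (x - s n)) \<longlonglongrightarrow> d"
  proof (rule tendsto_sandwich)
    show "\<forall>\<^sub>F n in sequentially. d \<le> norm (x - s n)" using d_le s_in by simp
    show "\<forall>\<^sub>F n in sequentially. norm (x - s n) \<le> d + 1 / Suc n" using s_near by (simp add: less_imp_le)
    show "(\<lambda>n. d + 1 / real (Suc n)) \<longlonglongrightarrow> d"
      using tendsto_add[OF tendsto_const LIMSEQ_inverse_real_of_nat] by (simp add: inverse_eq_divide)
  qed simp
  have "Cauchy s"
  proof (rule metric_CauchyI)
    fix e :: real
    assume "e > 0"
    have "(\<lambda>n. (norm (x - s n))\<^sup>2 - d\<^sup>2) \<longlonglongrightarrow> d\<^sup>2 - d\<^sup>2"
      by (intro tendsto_intros s_lim)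
    moreover have "e\<^sup>2 / 4 > 0" using \<open>e > 0\<close> by simp
    ultimately obtain M where M: "\<And>n. n \<ge> M \<Longrightarrow> (norm (x - s n))\<^sup>2 - d\<^sup>2 < e\<^sup>2 / 4"
      by (metis (no_types, lifting) diff_self order_tendstoD(2) eventually_sequentially)
    have "dist (s m) (s n) < e" if "m \<ge> M" "n \<ge> M" for m n
    proof -
      have "(1/2) *\<^sub>R (s m + s n) \<in> S"
        using s_in assms(1) by (simp add: subspace_add subspace_scale)
      then have "d\<^sup>2 \<le> (norm (x - (1/2) *\<^sub>R (s m + s n)))\<^sup>2"
        using d_le infdist_nonneg[of x S] by (simp add: d_def power_mono)
      then have "(dist (s m) (s n))\<^sup>2 < e\<^sup>2"
        using norm_diff_midpoint[of "s m" "s n" x] M[OF that(1)] M[OF that(2)] by (simp add: dist_norm)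
      then show ?thesis using \<open>e > 0\<close> by (simp add: power_less_imp_less_base)
    qed
    then show "\<exists>M. \<forall>m\<ge>M. \<forall>n\<ge>M. dist (s m) (s n) < e" by blast
  qed
  then obtain p where p: "s \<longlonglongrightarrow> p" using Cauchy_convergent_iff convergent_def by blast
  have "p \<in> S" using closed_sequentially[OF assms(2)] s_in p by blast
  moreover have "norm (x - p) = d"
    using tendsto_unique[OF _ tendsto_norm[OF tendsto_diff[OF tendsto_const p]] s_lim] by simp
  ultimately show ?thesis using that d_le by simp
qed

lemma nearest_point_orthogonal:
  fixes S :: "'a::real_inner set"
  assumes "subspace S" and "p \<in> S" and nearest: "\<And>s. s \<in> S \<Longrightarrow> norm (x - p) \<le> norm (x - s)"
    and "t \<in> S"
  shows "(x - p) \<bullet> t = 0"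
proof (cases "t = 0")
  case False
  define c where "c = (x - p) \<bullet> t"
  define r where "r = c / (t \<bullet> t)"
  have tt: "t \<bullet> t > 0" using False by simp
  have "p + r *\<^sub>R t \<in> S" using assms by (simp add: subspace_add subspace_scale)
  then have "(norm (x - p))\<^sup>2 \<le> (norm (x - (p + r *\<^sub>R t)))\<^sup>2"
    using nearest by (simp add: power_mono)
  also have "\<dots> = (norm (x - p))\<^sup>2 - 2 * r * c + r * r * (t \<bullet> t)"
    by (simp add: power2_norm_eq_inner inner_diff_left inner_diff_right inner_add_left inner_add_right
        inner_commute algebra_simps c_def)
  also have "\<dots> = (norm (x - p))\<^sup>2 - c\<^sup>2 / (t \<bullet> t)"
    using tt by (simp add: r_def field_simps power2_eq_square)
  finally have "c\<^sup>2 \<le> 0" using tt by (simp add: divide_le_0_iff)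
  then show ?thesis by (simp add: c_def)
qed simp

lemma orthogonal_projection_exists:
  fixes S :: "'a::{real_inner,complete_space} set"
  assumes "subspace S" and "closed S"
  obtains p where "p \<in> S" and "\<And>s. s \<in> S \<Longrightarrow> (x - p) \<bullet> s = 0"
  using closed_subspace_nearest_point[OF assms] nearest_point_orthogonal[OF assms(1)] by metis

section \<open>The adjoint of an isometry\<close>

locale lin_isometry =
  fixes V :: "'a::{real_inner,complete_space} \<Rightarrow> 'a"
  assumes orthogonal_V: "orthogonal_transformation V"
begin

lemma linear: "linear V"
  using orthogonal_V by (rule orthogonal_transformation_linear)

lemma bounded_linear: "bounded_linear V"
  using orthogonal_V by (rule orthogonal_transformation_bounded_linear)

lemma inj: "inj V"
  using orthogonal_V by (rule orthogonal_transformation_inj)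

lemma orthogonal_transformation_funpow_V: "orthogonal_transformation (V ^^ n)"
  using orthogonal_V by (rule orthogonal_transformation_funpow)

lemma inner_funpow_V [simp]: "(V ^^ n) x \<bullet> (V ^^ n) y = x \<bullet> y"
  using orthogonal_transformation_funpow_V by (simp add: orthogonal_transformation_def)

lemma inner_eq [simp]: "V x \<bullet> V y = x \<bullet> y"
  using inner_funpow_V[of 1] by simp

lemma norm_funpow_V [simp]: "norm ((V ^^ n) x) = norm x"
  using orthogonal_transformation_funpow_V by (rule orthogonal_transformation_norm)

lemma norm_eq [simp]: "norm (V x) = norm x"
  using norm_funpow_V[of 1] by simp

lemma linear_funpow_V: "linear (V ^^ n)"
  using orthogonal_transformation_funpow_V by (rule orthogonal_transformation_linear)

lemma bounded_linear_funpow_V: "bounded_linear (V ^^ n)"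
  using orthogonal_transformation_funpow_V by (rule orthogonal_transformation_bounded_linear)

text \<open>HOL-Analysis provides adjoints only on \<^class>\<open>euclidean_space\<close>; here \<open>V\<^sup>* y\<close> is
  obtained from the orthogonal projection of \<open>y\<close> onto the closed range of \<open>V\<close>.\<close>

lemma adjoint_exists: "\<exists>a. \<forall>x. a \<bullet> x = y \<bullet> V x"
proof -
  have "subspace (range V)" by (simp add: linear linear_subspace_image)
  then obtain p where "p \<in> range V" and p: "\<And>s. s \<in> range V \<Longrightarrow> (y - p) \<bullet> s = 0"
    using orthogonal_projection_exists orthogonal_transformation_closed_range[OF orthogonal_V]
    by metis
  then obtain a where "p = V a" by blast
  have "a \<bullet> x = y \<bullet> V x" for x
    using p[of "V x"] by (simp add: \<open>p = V a\<close> inner_diff_left)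
  then show ?thesis by blast
qed

definition adj :: "'a \<Rightarrow> 'a" where
  "adj y = (SOME a. \<forall>x. a \<bullet> x = y \<bullet> V x)"

lemma adj_inner: "adj y \<bullet> x = y \<bullet> V x"
  unfolding adj_def using someI_ex[OF adjoint_exists[of y]] by blast

lemma adj_eqI: "(\<And>x. a \<bullet> x = y \<bullet> V x) \<Longrightarrow> adj y = a"
  by (metis adj_inner vector_eq_rdot)

lemma adj_V [simp]: "adj (V x) = x"
  by (rule adj_eqI) simp

lemma linear_adj: "linear adj"
  by (rule linearI; rule adj_eqI) (simp_all add: adj_inner inner_add_left)

definition wandering_proj :: "'a \<Rightarrow> 'a" where
  "wandering_proj y = y - V (adj y)"

lemma adj_wandering_proj [simp]: "adj (wandering_proj y) = 0"
  by (simp add: wandering_proj_def linear_diff[OF linear_adj])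

lemma wandering_proj_V [simp]: "wandering_proj (V y) = 0"
  by (simp add: wandering_proj_def)

definition wandering_space :: "'a set" where
  "wandering_space = {l. adj l = 0}"

lemma mem_wandering_space [simp]: "l \<in> wandering_space \<longleftrightarrow> adj l = 0"
  by (simp add: wandering_space_def)

lemma norm_adj_wandering_proj: "(norm y)\<^sup>2 = (norm (adj y))\<^sup>2 + (norm (wandering_proj y))\<^sup>2"
proof -
  have "orthogonal (V (adj y)) (wandering_proj y)"
    by (simp add: orthogonal_def wandering_proj_def inner_diff_right inner_commute adj_inner)
  then have "(norm (V (adj y) + wandering_proj y))\<^sup>2 = (norm (adj y))\<^sup>2 + (norm (wandering_proj y))\<^sup>2"
    by (simp add: norm_add_Pythagorean)
  then show ?thesis by (simp add: wandering_proj_def)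
qed

lemma norm_adj_le: "norm (adj y) \<le> norm y"
  using norm_adj_wandering_proj[of y] by (simp add: power2_le_imp_le)

lemma bounded_linear_adj: "bounded_linear adj"
  using linear_adj norm_adj_le
  by (intro bounded_linear_intro[where K=1]) (simp_all add: linear_add linear_scale)

lemma bounded_linear_wandering_proj: "bounded_linear wandering_proj"
  unfolding wandering_proj_def[abs_def]
  by (intro bounded_linear_sub bounded_linear_ident bounded_linear_compose[OF bounded_linear bounded_linear_adj])

lemma linear_wandering_proj: "linear wandering_proj"
  using bounded_linear_wandering_proj by (rule bounded_linear.linear)

lemma bounded_linear_funpow_adj: "bounded_linear (adj ^^ n)"
  using bounded_linear_adj by (rule bounded_linear_funpow)

lemma linear_funpow_adj: "linear (adj ^^ n)"
  using bounded_linear_funpow_adj by (rule bounded_linear.linear)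

lemma funpow_adj_inner: "(adj ^^ n) y \<bullet> x = y \<bullet> (V ^^ n) x"
proof (induction n arbitrary: y)
  case (Suc n)
  have "(adj ^^ Suc n) y \<bullet> x = (adj ^^ n) (adj y) \<bullet> x"
    by (simp only: funpow_Suc_right comp_apply)
  then show ?case by (simp add: Suc.IH adj_inner)
qed simp

lemma funpow_adj_funpow_V [simp]: "(adj ^^ n) ((V ^^ n) x) = x"
  by (metis funpow_adj_inner inner_funpow_V vector_eq_rdot)

lemma funpow_adj_funpow_V_le: "m \<le> n \<Longrightarrow> (adj ^^ m) ((V ^^ n) x) = (V ^^ (n - m)) x"
  by (metis funpow_adj_funpow_V funpow_add le_add_diff_inverse comp_apply)

lemma funpow_adj_funpow_V_ge: "n \<le> m \<Longrightarrow> (adj ^^ m) ((V ^^ n) x) = (adj ^^ (m - n)) x"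
  by (metis funpow_adj_funpow_V funpow_add le_add_diff_inverse2 comp_apply)

lemma funpow_adj_wandering: "adj l = 0 \<Longrightarrow> (adj ^^ Suc n) l = 0"
  by (simp only: funpow_Suc_right comp_apply) (simp add: linear_0[OF linear_funpow_adj])

lemma norm_funpow_adj_le: "norm ((adj ^^ n) y) \<le> norm y"
  by (induction n arbitrary: y) (auto intro: order_trans[OF norm_adj_le])

section \<open>The Wold decomposition\<close>

definition range_proj :: "nat \<Rightarrow> 'a \<Rightarrow> 'a" where
  "range_proj n y = (V ^^ n) ((adj ^^ n) y)"

lemma bounded_linear_range_proj: "bounded_linear (range_proj n)"
  unfolding range_proj_def[abs_def]
  by (rule bounded_linear_compose[OF bounded_linear_funpow_V bounded_linear_funpow_adj])

lemma linear_range_proj: "linear (range_proj n)"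
  using bounded_linear_range_proj by (rule bounded_linear.linear)

lemma norm_range_proj: "norm (range_proj n y) = norm ((adj ^^ n) y)"
  by (simp add: range_proj_def)

lemma norm_funpow_adj_Suc:
  "(norm ((adj ^^ n) x))\<^sup>2 = (norm ((adj ^^ Suc n) x))\<^sup>2 + (norm (wandering_proj ((adj ^^ n) x)))\<^sup>2"
  using norm_adj_wandering_proj[of "(adj ^^ n) x"] by simp

lemma norm_range_proj_diff:
  assumes "m \<le> n"
  shows "(norm (range_proj m x - range_proj n x))\<^sup>2 = (norm ((adj ^^ m) x))\<^sup>2 - (norm ((adj ^^ n) x))\<^sup>2"
proof -
  have "range_proj n x = (V ^^ m) ((V ^^ (n - m)) ((adj ^^ n) x))"
    using assms by (simp add: range_proj_def flip: funpow_add comp_apply[of "V ^^ m"])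
  then have "range_proj m x \<bullet> range_proj n x = (adj ^^ (n - m)) ((adj ^^ m) x) \<bullet> (adj ^^ n) x"
    by (simp add: range_proj_def funpow_adj_inner)
  also have "\<dots> = (norm ((adj ^^ n) x))\<^sup>2"
    using assms by (simp add: power2_norm_eq_inner flip: funpow_add comp_apply[of "adj ^^ (n - m)"])
  finally have "range_proj m x \<bullet> range_proj n x = (norm (range_proj n x))\<^sup>2"
    by (simp add: norm_range_proj)
  then show ?thesis
    unfolding norm_range_proj[symmetric]
    by (simp add: power2_norm_eq_inner inner_diff_left inner_diff_right inner_commute)
qed

lemma convergent_range_proj: "convergent (\<lambda>n. range_proj n x)"
proof -
  define a where "a n = (norm ((adj ^^ n) x))\<^sup>2" for n
  have "decseq a"
    by (rule decseq_SucI) (simp add: a_def norm_funpow_adj_Suc[of _ x])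
  then obtain c where "a \<longlonglongrightarrow> c"
    using decseq_convergent[of a 0] by (auto simp: a_def)
  then have "Cauchy a" by (rule LIMSEQ_imp_Cauchy)
  have dist_sq: "(dist (range_proj m x) (range_proj n x))\<^sup>2 \<le> dist (a m) (a n)" for m n
  proof (induction m n rule: linorder_wlog)
    case (le m n)
    then show ?case by (simp add: dist_norm norm_range_proj_diff a_def)
  next
    case (sym m n)
    then show ?case by (simp add: dist_commute)
  qed
  have "Cauchy (\<lambda>n. range_proj n x)"
  proof (rule metric_CauchyI)
    fix e :: real
    assume "e > 0"
    then obtain M where M: "\<And>m n. m \<ge> M \<Longrightarrow> n \<ge> M \<Longrightarrow> dist (a m) (a n) < e\<^sup>2"
      using metric_CauchyD[OF \<open>Cauchy a\<close>, of "e\<^sup>2"] by auto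
    have "dist (range_proj m x) (range_proj n x) < e" if "m \<ge> M" "n \<ge> M" for m n
      using dist_sq[of m n] M[OF that] \<open>e > 0\<close> by (simp add: power2_less_imp_less)
    then show "\<exists>M. \<forall>m\<ge>M. \<forall>n\<ge>M. dist (range_proj m x) (range_proj n x) < e" by blast
  qed
  then show ?thesis by (simp add: Cauchy_convergent_iff)
qed

definition unitary_proj :: "'a \<Rightarrow> 'a" where
  "unitary_proj x = lim (\<lambda>n. range_proj n x)"

lemma range_proj_tendsto: "(\<lambda>n. range_proj n x) \<longlonglongrightarrow> unitary_proj x"
  unfolding unitary_proj_def using convergent_range_proj by (rule convergent_LIMSEQ_iff[THEN iffD1])

lemma unitary_proj_eqI: "(\<lambda>n. range_proj n x) \<longlonglongrightarrow> y \<Longrightarrow> unitary_proj x = y"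
  using range_proj_tendsto by (rule LIMSEQ_unique)

lemma bounded_linear_unitary_proj: "bounded_linear unitary_proj"
proof (rule bounded_linear_intro[where K=1])
  show "unitary_proj (x + y) = unitary_proj x + unitary_proj y" for x y
    by (rule unitary_proj_eqI)
      (simp add: linear_add[OF linear_range_proj] tendsto_add range_proj_tendsto)
  show "unitary_proj (r *\<^sub>R x) = r *\<^sub>R unitary_proj x" for r x
    by (rule unitary_proj_eqI)
      (simp add: linear_scale[OF linear_range_proj] tendsto_scaleR range_proj_tendsto)
  show "norm (unitary_proj x) \<le> norm x * 1" for x
    using tendsto_norm[OF range_proj_tendsto]
    by (rule LIMSEQ_le_const2) (simp add: norm_range_proj norm_funpow_adj_le)
qed

lemma linear_unitary_proj: "linear unitary_proj"
  using bounded_linear_unitary_proj by (rule bounded_linear.linear)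

lemma unitary_proj_V: "unitary_proj (V x) = V (unitary_proj x)"
proof (rule unitary_proj_eqI)
  have "range_proj (Suc n) (V x) = V (range_proj n x)" for n
    by (simp only: range_proj_def funpow_Suc_right comp_apply adj_V funpow_swap1[of V])
  moreover have "(\<lambda>n. V (range_proj n x)) \<longlonglongrightarrow> V (unitary_proj x)"
    using bounded_linear range_proj_tendsto by (rule bounded_linear.tendsto)
  ultimately have "(\<lambda>n. range_proj (Suc n) (V x)) \<longlonglongrightarrow> V (unitary_proj x)"
    by simp
  then show "(\<lambda>n. range_proj n (V x)) \<longlonglongrightarrow> V (unitary_proj x)"
    by (rule LIMSEQ_imp_Suc)
qed

lemma unitary_proj_funpow_V_wandering:
  assumes "adj l = 0"
  shows "unitary_proj ((V ^^ n) l) = 0"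
proof (rule unitary_proj_eqI, rule LIMSEQ_offset[where k = "Suc n"])
  have "range_proj (m + Suc n) ((V ^^ n) l) = 0" for m
    using funpow_adj_funpow_V_ge[of n "m + Suc n" l] funpow_adj_wandering[OF assms, of m]
    by (simp add: range_proj_def linear_0[OF linear_funpow_V] linear_0[OF linear])
  then show "(\<lambda>m. range_proj (m + Suc n) ((V ^^ n) l)) \<longlonglongrightarrow> 0" by simp
qed

definition unitary_part :: "'a set" where
  "unitary_part = (\<Inter>n. range (V ^^ n))"

lemma closed_unitary_part: "closed unitary_part"
  unfolding unitary_part_def
  by (intro closed_INT ballI orthogonal_transformation_closed_range orthogonal_transformation_funpow_V)

lemma subspace_unitary_part: "subspace unitary_part"
  unfolding unitary_part_def
  by (rule subspace_Inter) (auto simp: linear_subspace_image linear_funpow_V)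

lemma unitary_proj_in_unitary_part: "unitary_proj x \<in> unitary_part"
  unfolding unitary_part_def
proof
  fix n
  have "range_proj (m + n) x \<in> range (V ^^ n)" for m
    unfolding range_proj_def add.commute[of m n] funpow_add comp_apply by (rule rangeI)
  moreover have "(\<lambda>m. range_proj (m + n) x) \<longlonglongrightarrow> unitary_proj x"
    using range_proj_tendsto by (rule LIMSEQ_ignore_initial_segment)
  ultimately show "unitary_proj x \<in> range (V ^^ n)"
    by (rule closed_sequentially[OF orthogonal_transformation_closed_range[OF orthogonal_transformation_funpow_V]])
qed

lemma unitary_proj_unitary_part:
  assumes "k \<in> unitary_part"
  shows "unitary_proj k = k"
proof (rule unitary_proj_eqI)
  have "range_proj n k = k" for n
  proof -
    obtain z where "k = (V ^^ n) z" using assms unfolding unitary_part_def by blast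
    then show ?thesis by (simp add: range_proj_def)
  qed
  then show "(\<lambda>n. range_proj n k) \<longlonglongrightarrow> k" by simp
qed

lemma V_image_unitary_part: "V ` unitary_part = unitary_part"
proof
  show "V ` unitary_part \<subseteq> unitary_part"
    by (auto simp: unitary_part_def funpow_swap1[of V])
  show "unitary_part \<subseteq> V ` unitary_part"
  proof
    fix k
    assume k: "k \<in> unitary_part"
    then have "k \<in> range (V ^^ 1)" unfolding unitary_part_def by blast
    then obtain z where z: "k = V z" by auto
    have "z \<in> range (V ^^ n)" for n
    proof -
      obtain w where "k = (V ^^ Suc n) w" using k unfolding unitary_part_def by blast
      then have "z = (V ^^ n) w" using z inj by (simp add: inj_eq)
      then show ?thesis by simp
    qed
    then show "k \<in> V ` unitary_part" using z unfolding unitary_part_def by blast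
  qed
qed

lemma orthogonal_funpow_V_wandering:
  assumes "adj a = 0" and "adj b = 0" and "m \<noteq> n"
  shows "orthogonal ((V ^^ m) a) ((V ^^ n) b)"
proof -
  have key: "(V ^^ m) a \<bullet> (V ^^ n) b = 0" if "adj a = 0" and "m < n" for a b m n
  proof -
    have "(adj ^^ n) ((V ^^ m) a) = (adj ^^ Suc (n - Suc m)) a"
      using funpow_adj_funpow_V_ge[of m n a] that(2) by (simp only: Suc_diff_Suc less_imp_le)
    then have "(adj ^^ n) ((V ^^ m) a) = 0"
      using funpow_adj_wandering[OF that(1)] by simp
    then show ?thesis by (simp add: funpow_adj_inner[symmetric])
  qed
  consider "m < n" | "n < m" using assms(3) by linarith
  then show ?thesis
  proof cases
    case 1
    then show ?thesis using key[OF assms(1) 1] by (simp add: orthogonal_def)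
  next
    case 2
    then show ?thesis using key[OF assms(2) 2] by (simp add: orthogonal_def inner_commute)
  qed
qed

lemma norm_sum_funpow_V_wandering:
  assumes "finite A" and "\<And>n. adj (f n) = 0"
  shows "(norm (\<Sum>n\<in>A. (V ^^ n) (f n)))\<^sup>2 = (\<Sum>n\<in>A. (norm (f n))\<^sup>2)"
  using norm_sum_Pythagorean[OF assms(1), of "\<lambda>n. (V ^^ n) (f n)"] orthogonal_funpow_V_wandering assms(2)
  by (simp add: pairwise_def)

lemma summable_funpow_V_wandering:
  assumes "\<And>n. adj (f n) = 0" and "summable (\<lambda>n. (norm (f n))\<^sup>2)"
  shows "summable (\<lambda>n. (V ^^ n) (f n))"
proof -
  have "Cauchy (\<lambda>n. \<Sum>i<n. (V ^^ i) (f i))"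
    unfolding Cauchy_altdef
  proof (intro allI impI)
    fix e :: real
    assume "e > 0"
    then obtain N where N: "\<And>m n. m \<ge> N \<Longrightarrow> norm (\<Sum>i\<in>{m..<n}. (norm (f i))\<^sup>2) < e\<^sup>2"
      using assms(2)[unfolded summable_Cauchy, rule_format, of "e\<^sup>2"] by auto
    have "dist (\<Sum>i<m. (V ^^ i) (f i)) (\<Sum>i<n. (V ^^ i) (f i)) < e" if "m \<ge> N" "m < n" for m n
    proof -
      have "(\<Sum>i<n. (V ^^ i) (f i)) - (\<Sum>i<m. (V ^^ i) (f i)) = (\<Sum>i\<in>{m..<n}. (V ^^ i) (f i))"
        using sum_diff_nat_ivl[of 0 m n "\<lambda>i. (V ^^ i) (f i)"] that(2) by (simp add: atLeast0LessThan)
      then have "(dist (\<Sum>i<m. (V ^^ i) (f i)) (\<Sum>i<n. (V ^^ i) (f i)))\<^sup>2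
          = (norm (\<Sum>i\<in>{m..<n}. (V ^^ i) (f i)))\<^sup>2"
        by (metis dist_commute dist_norm)
      also have "\<dots> = (\<Sum>i\<in>{m..<n}. (norm (f i))\<^sup>2)"
        using assms(1) by (simp add: norm_sum_funpow_V_wandering)
      also have "\<dots> < e\<^sup>2"
        using N[OF that(1), of n] by (simp add: sum_nonneg)
      finally show ?thesis using \<open>e > 0\<close> by (simp add: power2_less_imp_less)
    qed
    then show "\<exists>M. \<forall>m\<ge>M. \<forall>n>m. dist (\<Sum>i<m. (V ^^ i) (f i)) (\<Sum>i<n. (V ^^ i) (f i)) < e"
      by blast
  qed
  then show ?thesis by (simp add: summable_iff_convergent Cauchy_convergent_iff)
qed

lemma wandering_proj_funpow_adj_funpow_V:
  assumes "adj l = 0"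
  shows "wandering_proj ((adj ^^ m) ((V ^^ n) l)) = (if n = m then l else 0)"
proof -
  consider "n = m" | "m < n" | "n < m" by linarith
  then show ?thesis
  proof cases
    case 1
    then show ?thesis using assms by (simp add: wandering_proj_def linear_0[OF linear])
  next
    case 2
    then have "n - m = Suc (n - Suc m)" by simp
    then have "(adj ^^ m) ((V ^^ n) l) = V ((V ^^ (n - Suc m)) l)"
      using funpow_adj_funpow_V_le[of m n l] 2 by simp
    then show ?thesis using 2 by simp
  next
    case 3
    then have "(adj ^^ m) ((V ^^ n) l) = (adj ^^ Suc (m - Suc n)) l"
      using funpow_adj_funpow_V_ge[of n m l] by (simp only: Suc_diff_Suc less_imp_le)
    then show ?thesis
      using 3 funpow_adj_wandering[OF assms] by (simp add: linear_0[OF linear_wandering_proj])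
  qed
qed

lemma wandering_proj_funpow_adj_unitary_part:
  assumes "k \<in> unitary_part"
  shows "wandering_proj ((adj ^^ m) k) = 0"
proof -
  obtain z where "k = (V ^^ Suc m) z" using assms unfolding unitary_part_def by blast
  then have "(adj ^^ m) k = V z" using funpow_adj_funpow_V_le[of m "Suc m" z] by simp
  then show ?thesis by simp
qed

definition wold :: "'a \<Rightarrow> (nat \<Rightarrow> 'a) \<times> 'a" where
  "wold x = ((\<lambda>n. wandering_proj ((adj ^^ n) x)), unitary_proj x)"

lemma wold_norm_sums:
  "(\<lambda>n. (norm (wandering_proj ((adj ^^ n) x)))\<^sup>2) sums ((norm x)\<^sup>2 - (norm (unitary_proj x))\<^sup>2)"
proof -
  have partial: "(\<Sum>n<N. (norm (wandering_proj ((adj ^^ n) x)))\<^sup>2) = (norm x)\<^sup>2 - (norm ((adj ^^ N) x))\<^sup>2" for N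
    by (induction N) (simp_all add: norm_funpow_adj_Suc[of _ x])
  have "(\<lambda>N. (norm (range_proj N x))\<^sup>2) \<longlonglongrightarrow> (norm (unitary_proj x))\<^sup>2"
    by (intro tendsto_intros range_proj_tendsto)
  then have "(\<lambda>N. (norm x)\<^sup>2 - (norm ((adj ^^ N) x))\<^sup>2) \<longlonglongrightarrow> (norm x)\<^sup>2 - (norm (unitary_proj x))\<^sup>2"
    unfolding norm_range_proj by (rule tendsto_diff[OF tendsto_const])
  then show ?thesis unfolding sums_def partial .
qed

lemma wold_wandering_series:
  assumes f: "\<And>n. adj (f n) = 0" and f_sq: "summable (\<lambda>n. (norm (f n))\<^sup>2)" and k: "k \<in> unitary_part"
  shows "wold ((\<Sum>n. (V ^^ n) (f n)) + k) = (f, k)"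
proof -
  have s: "summable (\<lambda>n. (V ^^ n) (f n))"
    using f f_sq by (rule summable_funpow_V_wandering)
  have "wandering_proj ((adj ^^ m) (\<Sum>n. (V ^^ n) (f n))) = f m" for m
  proof -
    have "bounded_linear (\<lambda>x. wandering_proj ((adj ^^ m) x))"
      by (rule bounded_linear_compose[OF bounded_linear_wandering_proj bounded_linear_funpow_adj])
    then have "wandering_proj ((adj ^^ m) (\<Sum>n. (V ^^ n) (f n)))
        = (\<Sum>n. wandering_proj ((adj ^^ m) ((V ^^ n) (f n))))"
      using s by (rule bounded_linear.suminf)
    also have "\<dots> = (\<Sum>n. if n = m then f n else 0)"
      by (simp add: wandering_proj_funpow_adj_funpow_V[OF f])
    also have "\<dots> = f m"
      using sums_single[of m f] by (rule sums_unique[symmetric])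
    finally show ?thesis .
  qed
  moreover have "unitary_proj (\<Sum>n. (V ^^ n) (f n)) = 0"
    using bounded_linear.suminf[OF bounded_linear_unitary_proj s]
    by (simp add: unitary_proj_funpow_V_wandering[OF f])
  ultimately show ?thesis
    using k
    by (simp add: wold_def fun_eq_iff linear_add[OF linear_funpow_adj] linear_add[OF linear_wandering_proj]
        linear_add[OF linear_unitary_proj] wandering_proj_funpow_adj_unitary_part unitary_proj_unitary_part)
qed

lemma range_wold: "range wold = hardy wandering_space \<times> unitary_part"
proof
  show "range wold \<subseteq> hardy wandering_space \<times> unitary_part"
    using wold_norm_sums sums_summable unitary_proj_in_unitary_part
    by (auto simp: wold_def hardy_def)
  show "hardy wandering_space \<times> unitary_part \<subseteq> range wold"
  proof clarify
    fix f k
    assume "f \<in> hardy wandering_space" and "k \<in> unitary_part"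
    then have "wold ((\<Sum>n. (V ^^ n) (f n)) + k) = (f, k)"
      by (intro wold_wandering_series) (simp_all add: hardy_def)
    then show "(f, k) \<in> range wold" by (metis rangeI)
  qed
qed

lemma funpow_adj_Suc_V: "(adj ^^ Suc n) (V x) = (adj ^^ n) x"
  by (simp only: funpow_Suc_right comp_apply adj_V)

lemma wold_V: "wold (V x) = (tshift id (fst (wold x)), V (snd (wold x)))"
proof -
  have "wandering_proj ((adj ^^ n) (V x)) = tshift id (\<lambda>n. wandering_proj ((adj ^^ n) x)) n" for n
    by (cases n) (simp_all add: tshift_def funpow_adj_Suc_V del: funpow.simps)
  then show ?thesis by (simp add: wold_def unitary_proj_V fun_eq_iff)
qed

subsection \<open>Unitaries commuting with the isometry\<close>

definition commuting_unitary :: "('a \<Rightarrow> 'a) \<Rightarrow> bool" where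
  "commuting_unitary T \<longleftrightarrow> orthogonal_transformation T \<and> surj T \<and> (\<forall>x. T (V x) = V (T x))"

lemma adj_commute:
  assumes "commuting_unitary T"
  shows "adj (T y) = T (adj y)"
proof (rule adj_eqI)
  fix z
  from assms have T: "orthogonal_transformation T" "surj T" "\<And>x. T (V x) = V (T x)"
    unfolding commuting_unitary_def by blast+
  obtain u where z: "z = T u" using surjD[OF T(2)] by blast
  have "T (adj y) \<bullet> T u = T y \<bullet> T (V u)"
    using T(1) by (simp add: orthogonal_transformation_def adj_inner)
  then show "T (adj y) \<bullet> z = T y \<bullet> V z" by (simp add: z T(3))
qed

lemma wandering_proj_commute:
  assumes "commuting_unitary T"
  shows "wandering_proj (T y) = T (wandering_proj y)"
proof -
  have "linear T" "T (V (adj y)) = V (T (adj y))"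
    using assms by (simp_all add: commuting_unitary_def orthogonal_transformation_linear)
  then show ?thesis
    by (simp add: wandering_proj_def adj_commute[OF assms] linear_diff)
qed

lemma unitary_proj_commute:
  assumes T: "commuting_unitary T"
  shows "unitary_proj (T x) = T (unitary_proj x)"
proof (rule unitary_proj_eqI)
  have TV: "T (V y) = V (T y)" for y
    using T by (simp add: commuting_unitary_def)
  have "range_proj n (T x) = T (range_proj n x)" for n
    unfolding range_proj_def funpow_commute[of T adj, OF adj_commute[OF T, symmetric], symmetric]
    by (rule funpow_commute[symmetric]) (rule TV)
  moreover have "bounded_linear T"
    using T by (simp add: commuting_unitary_def orthogonal_transformation_bounded_linear)
  then have "(\<lambda>n. T (range_proj n x)) \<longlonglongrightarrow> T (unitary_proj x)"
    using range_proj_tendsto by (rule bounded_linear.tendsto)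
  ultimately show "(\<lambda>n. range_proj n (T x)) \<longlonglongrightarrow> T (unitary_proj x)" by simp
qed

lemma wandering_space_image:
  assumes T: "commuting_unitary T"
  shows "T ` wandering_space = wandering_space"
proof (rule image_eq_if_vimage_eq)
  have "T z = 0 \<longleftrightarrow> z = 0" for z
    using T orthogonal_transformation_norm[of T z] by (metis commuting_unitary_def norm_eq_zero)
  then show "T -` wandering_space = wandering_space"
    by (simp add: wandering_space_def vimage_def adj_commute[OF T])
qed (use T in \<open>simp add: commuting_unitary_def\<close>)

lemma unitary_part_image:
  assumes T: "commuting_unitary T"
  shows "T ` unitary_part = unitary_part"
proof -
  have T_inj: "inj T" and T_surj: "surj T" and TV: "\<And>x. T (V x) = V (T x)"
    using T by (simp_all add: commuting_unitary_def orthogonal_transformation_inj)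
  have "T x \<in> range (V ^^ n) \<longleftrightarrow> x \<in> range (V ^^ n)" for x n
  proof
    assume "T x \<in> range (V ^^ n)"
    then obtain w where "T x = (V ^^ n) (T w)" using T_surj by (metis rangeE surjD)
    then have "x = (V ^^ n) w" using T_inj by (simp add: funpow_commute[of T V, OF TV, symmetric] inj_eq)
    then show "x \<in> range (V ^^ n)" by simp
  qed (auto simp: funpow_commute[of T V, OF TV])
  then have "T -` unitary_part = unitary_part"
    by (auto simp: unitary_part_def)
  then show ?thesis using T_surj by (rule image_eq_if_vimage_eq[rotated])
qed

lemma wold_commute:
  assumes T: "commuting_unitary T"
  shows "wold (T x) = ((\<lambda>n. T (fst (wold x) n)), T (snd (wold x)))"
proof -
  have "(adj ^^ n) (T x) = T ((adj ^^ n) x)" for n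
    using funpow_commute[of T adj, OF adj_commute[OF T, symmetric]] by simp
  then show ?thesis
    by (simp add: wold_def wandering_proj_commute[OF T] unitary_proj_commute[OF T])
qed

lemma commuting_isometry_factor:
  assumes W: "orthogonal_transformation W" and range_eq: "range W = range V"
    and WV: "\<And>x. W (V x) = V (W x)"
  obtains X where "commuting_unitary X" and "\<And>x. V (X x) = W x"
proof
  have V_adj_W: "V (adj (W x)) = W x" for x
    using range_eq by (metis adj_V rangeE rangeI)
  then show "V (adj (W x)) = W x" for x .
  have "linear (\<lambda>x. adj (W x))"
    using linear_compose[OF orthogonal_transformation_linear[OF W] linear_adj] by (simp add: comp_def)
  moreover have "norm (adj (W x)) = norm x" for x
    by (metis V_adj_W norm_eq W orthogonal_transformation_norm)
  moreover have "surj (\<lambda>x. adj (W x))"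
  proof -
    have "y \<in> range (\<lambda>x. adj (W x))" for y
    proof -
      obtain z where "V y = W z" using range_eq by (metis rangeE rangeI)
      then show ?thesis by (metis adj_V rangeI)
    qed
    then show ?thesis by blast
  qed
  moreover have "adj (W (V x)) = V (adj (W x))" for x
    using inj by (metis V_adj_W WV injD)
  ultimately show "commuting_unitary (\<lambda>x. adj (W x))"
    by (simp add: commuting_unitary_def orthogonal_transformation)
qed

lemma csubspace_wandering_space:
  assumes "commuting_unitary J"
  shows "csubspace J wandering_space"
  unfolding csubspace_def
proof (intro conjI ballI)
  show "subspace wandering_space"
    using linear_subspace_kernel[OF linear_adj] by (simp add: wandering_space_def)
  show "closed wandering_space"
    unfolding wandering_space_def
    by (intro closed_Collect_eq linear_continuous_on bounded_linear_adj continuous_on_const)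
  show "J x \<in> wandering_space" if "x \<in> wandering_space" for x
    using wandering_space_image[OF assms] that by blast
qed

lemma csubspace_unitary_part:
  assumes "commuting_unitary J"
  shows "csubspace J unitary_part"
  using unitary_part_image[OF assms] closed_unitary_part subspace_unitary_part
  by (auto simp: csubspace_def)

lemma unitary_onto_wold:
  assumes J: "commuting_unitary J"
  shows "unitary_onto J wandering_space unitary_part wold"
  unfolding unitary_onto_def
proof (intro conjI allI)
  show "linear (\<lambda>x. fst (wold x) n)" for n
    using linear_compose[OF linear_funpow_adj linear_wandering_proj] by (simp add: wold_def comp_def)
  show "linear (\<lambda>x. snd (wold x))"
    using linear_unitary_proj by (simp add: wold_def)
  show "wold (J x) = ((\<lambda>n. J (fst (wold x) n)), J (snd (wold x)))" for x
    by (rule wold_commute[OF J])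
  show "(norm x)\<^sup>2 = (\<Sum>n. (norm (fst (wold x) n))\<^sup>2) + (norm (snd (wold x)))\<^sup>2" for x
    using sums_unique[OF wold_norm_sums[of x]] by (simp add: wold_def)
  show "range wold = hardy wandering_space \<times> unitary_part"
    by (rule range_wold)
qed

lemma wold_V_comp:
  assumes "commuting_unitary X"
  shows "wold (V (X x)) = (tshift X (fst (wold x)), V (X (snd (wold x))))"
  using wold_V wold_commute[OF assms] by (simp add: tshift_id_comp)

end

section \<open>Complex structures\<close>

lemma cstruct_orthogonal_transformation: "cstruct J \<Longrightarrow> orthogonal_transformation J"
  by (simp add: cstruct_def orthogonal_transformation)

lemma cstruct_surj:
  assumes "cstruct J"
  shows "surj J"
proof (rule surjI)
  show "J (J (- x)) = x" for x using assms by (simp add: cstruct_def)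
qed

lemma c_isometry_orthogonal_transformation: "c_isometry J V \<Longrightarrow> orthogonal_transformation V"
  by (simp add: c_isometry_def orthogonal_transformation)

lemma unitary_onI:
  assumes W: "orthogonal_transformation W" and "\<And>x. W (J x) = J (W x)" and "W ` S = S"
  shows "unitary_on J S W"
  using assms linear_add[OF orthogonal_transformation_linear[OF W]]
  by (simp add: unitary_on_def orthogonal_transformation_norm orthogonal_transformation_scaleR)

theorem theorem5p4:
  fixes J V1 V2 :: "'h::{real_inner,complete_space} \<Rightarrow> 'h"
  assumes "cstruct J"
    and "c_isometry J V1" and "c_isometry J V2"
    and "V1 \<circ> V2 = V2 \<circ> V1"
    and "range V1 = range V2"
  shows "\<exists>L K W W1 W2 U.
           csubspace J L \<and> csubspace J K \<and>
           unitary_on J L W \<and> unitary_on J K W1 \<and> unitary_on J K W2 \<and>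
           (\<forall>x\<in>K. W1 (W2 x) = W2 (W1 x)) \<and>
           unitary_onto J L K U \<and>
           (\<forall>x. U (V1 x) = (tshift id (fst (U x)), W1 (snd (U x)))) \<and>
           (\<forall>x. U (V2 x) = (tshift W (fst (U x)), W2 (snd (U x))))"
proof -
  have V1: "orthogonal_transformation V1" and V2: "orthogonal_transformation V2"
    using assms(2,3) by (simp_all add: c_isometry_orthogonal_transformation)
  have V1_J: "V1 (J x) = J (V1 x)" and V2_J: "V2 (J x) = J (V2 x)" for x
    using assms(2,3) by (simp_all add: c_isometry_def)
  have V1_V2: "V1 (V2 x) = V2 (V1 x)" for x
    using fun_cong[OF assms(4), of x] by simp
  interpret V1: lin_isometry V1 using V1 by unfold_locales
  have J: "V1.commuting_unitary J"
    using assms(1) V1_J by (simp add: V1.commuting_unitary_def cstruct_orthogonal_transformation cstruct_surj)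
  obtain X where X: "V1.commuting_unitary X" and V1_X: "\<And>x. V1 (X x) = V2 x"
    using V1.commuting_isometry_factor[OF V2 assms(5)[symmetric] V1_V2[symmetric]] by blast
  have X_J: "X (J x) = J (X x)" for x
  proof -
    have "V1 (X (J x)) = V1 (J (X x))" by (simp add: V1_X V2_J V1_J)
    then show ?thesis using V1.inj by (simp add: inj_eq)
  qed
  have "V2 ` V1.unitary_part = V1 ` X ` V1.unitary_part" by (simp add: image_image V1_X)
  then have V2_image: "V2 ` V1.unitary_part = V1.unitary_part"
    by (simp add: V1.unitary_part_image[OF X] V1.V_image_unitary_part)
  have X_orth: "orthogonal_transformation X" using X by (simp add: V1.commuting_unitary_def)
  show ?thesis
  proof (rule exI[of _ V1.wandering_space], rule exI[of _ V1.unitary_part], rule exI[of _ X],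
      rule exI[of _ V1], rule exI[of _ V2], rule exI[of _ V1.wold], intro conjI ballI allI)
    show "csubspace J V1.wandering_space" using J by (rule V1.csubspace_wandering_space)
    show "csubspace J V1.unitary_part" using J by (rule V1.csubspace_unitary_part)
    show "unitary_on J V1.wandering_space X"
      using X_orth X_J V1.wandering_space_image[OF X] by (rule unitary_onI)
    show "unitary_on J V1.unitary_part V1"
      using V1 V1_J V1.V_image_unitary_part by (rule unitary_onI)
    show "unitary_on J V1.unitary_part V2"
      using V2 V2_J V2_image by (rule unitary_onI)
    show "V1 (V2 x) = V2 (V1 x)" for x by (rule V1_V2)
    show "unitary_onto J V1.wandering_space V1.unitary_part V1.wold"
      using J by (rule V1.unitary_onto_wold)
    show "V1.wold (V1 x) = (tshift id (fst (V1.wold x)), V1 (snd (V1.wold x)))" for x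
      by (rule V1.wold_V)
    show "V1.wold (V2 x) = (tshift X (fst (V1.wold x)), V2 (snd (V1.wold x)))" for x
      using V1.wold_V_comp[OF X] by (simp add: V1_X)
  qed
qed

end
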